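(* Let $D$ be the standard contact $(2n-1)$-ball and $p_\pm\in\partial D$ its poles. Let $\Delta=D^{2n-2}\times[0,a]$ ($a>0$) be the Weinstein cylinder over the unit ball $D^{2n-2}\subset\mathbb{R}^{2n-2}$, with contact structure $\ker(\lambda_{st}+dz)$, and let $\partial_+\Delta=D^{2n-2}\times a$. Then for every $\epsilon>0$ there exists a contact embedding $h:\Delta\to D$ such that $h(\partial_+\Delta)\subset\partial D$, the set $\partial D\setminus h(\partial_+\Delta)$ is contained in the $\epsilon$-neighborhood of the pole $p_-$, and $D\setminus h(\Delta)$ is contained in the $\epsilon$-neighborhood of $\partial D$.
   Context: The standard contact $(2n-1)$-ball is the hemisphere $D=S^{2n-1}\cap\{y_n\ge0\}\subset\mathbb{R}^{2n}$ with contact structure $\ker\big(\sum_{j=1}^n(x_jdy_j-y_jdx_j)|_{S^{2n-1}}\big)$; its boundary is $S^{2n-1}\cap\{y_n=0\}$ and its poles are $p_\pm=\{x_n=\pm1$, all other coordinates $0\}$. Distances are taken with respect to the metric induced from $\mathbb{R}^{2n}$. On $\mathbb{R}^{2n-2}$, $\lambda_{st}=\sum_{j=1}^{n-1}(x_jdy_j-y_jdx_j)$, and $z$ is the coordinate on $[0,a]$. *)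

theory Defs
  imports "HOL-Analysis.Analysis"
begin

primrec Ck_on :: "nat \<Rightarrow> ('a::euclidean_space \<Rightarrow> 'b::real_normed_vector) \<Rightarrow> 'a set \<Rightarrow> bool" where
  "Ck_on 0 f U = continuous_on U f"
| "Ck_on (Suc k) f U =
     (\<exists>f'. (\<forall>x\<in>U. (f has_derivative f' x) (at x)) \<and> (\<forall>b\<in>Basis. Ck_on k (\<lambda>x. f' x b) U))"

definition smooth_on :: "('a::euclidean_space \<Rightarrow> 'b::real_normed_vector) \<Rightarrow> 'a set \<Rightarrow> bool" where
  "smooth_on f U \<longleftrightarrow> open U \<and> (\<forall>k. Ck_on k f U)"

text \<open>With CARD('k) = n-1, a point of R^{2n} is written ((x',y'),(x_n,y_n))
with x',y' in R^{n-1}; a point of R^{2n-2} is (x',y'); a point of the cylinder is ((x',y'),z).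
The product norms in Isabelle are Euclidean, so distances are the Euclidean ones.\<close>

type_synonym 'k R2m = "(real^'k) \<times> (real^'k)"
type_synonym 'k R2n = "'k R2m \<times> (real \<times> real)"
type_synonym 'k cyl = "'k R2m \<times> real"

text \<open>lambda_st = sum_{j<n} (x_j dy_j - y_j dx_j), evaluated at point p on vector v.\<close>
definition lambda_st :: "'k::finite R2m \<Rightarrow> 'k R2m \<Rightarrow> real" where
  "lambda_st p v = fst p \<bullet> snd v - snd p \<bullet> fst v"

definition alpha_std :: "'k::finite R2n \<Rightarrow> 'k R2n \<Rightarrow> real" where
  "alpha_std p v = lambda_st (fst p) (fst v)
      + (fst (snd p) * snd (snd v) - snd (snd p) * fst (snd v))"

definition beta_cyl :: "'k::finite cyl \<Rightarrow> 'k cyl \<Rightarrow> real" where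
  "beta_cyl q v = lambda_st (fst q) (fst v) + snd v"

definition std_ball :: "'k::finite R2n set" where
  "std_ball = {p. norm p = 1 \<and> snd (snd p) \<ge> 0}"

definition std_ball_bdry :: "'k::finite R2n set" where
  "std_ball_bdry = {p. norm p = 1 \<and> snd (snd p) = 0}"

definition pole_plus :: "'k::finite R2n" where
  "pole_plus = ((0, 0), (1, 0))"

definition pole_minus :: "'k::finite R2n" where
  "pole_minus = ((0, 0), (-1, 0))"

definition wcyl :: "real \<Rightarrow> 'k::finite cyl set" where
  "wcyl a = {q. norm (fst q) \<le> 1 \<and> 0 \<le> snd q \<and> snd q \<le> a}"

definition wcyl_top :: "real \<Rightarrow> 'k::finite cyl set" where
  "wcyl_top a = {q. norm (fst q) \<le> 1 \<and> snd q = a}"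

text \<open>Contact embedding of Delta into D: h is (the restriction of) a smooth map on an open
neighbourhood of Delta, injective on Delta, with image in D, an immersion at every point of
Delta, and h^* alpha = f * beta with f nowhere zero on Delta (i.e. dh maps ker beta onto
ker alpha restricted to TD).\<close>
definition contact_embedding :: "real \<Rightarrow> ('k::finite cyl \<Rightarrow> 'k R2n) \<Rightarrow> bool" where
  "contact_embedding a h \<longleftrightarrow>
     (\<exists>U. wcyl a \<subseteq> U \<and> smooth_on h U) \<and>
     inj_on h (wcyl a) \<and> h ` wcyl a \<subseteq> std_ball \<and>
     (\<forall>q\<in>wcyl a. inj (frechet_derivative h (at q)) \<and>
        (\<exists>f::real. f \<noteq> 0 \<and>
           (\<forall>v. alpha_std (h q) (frechet_derivative h (at q) v) = f * beta_cyl q v)))"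

end

theory Submission
  imports Defs
begin

(* The embedding is an explicit Cayley transform. Write w in C^(n-1) for the point of the unit
   ball, z in [0, a] for the height, and put zeta = r^2 |w|^2 - 2 i r^2 (a - z). Then
     h (w, z) = (-2 i r conj(w) / (1 + zeta), (1 - zeta) / (1 + zeta))
   maps R^(2n-1) diffeomorphically onto the sphere minus p_-, with
   h^* alpha = -4 r^2 / |1 + zeta|^2 * (lambda_st + dz). Since y_n = 4 r^2 (a - z) / |1 + zeta|^2,
   the half-space z <= a lands in D and the plane z = a in its boundary. Conversely, a point p
   of D with |p - p_-| >= eps has |1 + x_n + i y_n| >= eps^2 / 2, so its preimage has both |w|^2
   and a - z at most (2 / (r eps^2))^2; for r = 2 (1 + 1/a) / eps^2 this is (1 + 1/a)^(-2),
   which is at most min 1 a. The points of D within eps of p_- are within eps of the boundary,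
   as p_- lies on it. *)

section \<open>C^k functions\<close>

lemma Ck_on_SucD: "Ck_on (Suc k) f U \<Longrightarrow> Ck_on k f U"
proof (induction k arbitrary: f)
  case 0
  then obtain f' where f': "\<forall>x\<in>U. (f has_derivative f' x) (at x)" by auto
  have "isCont f x" if "x \<in> U" for x
    using has_derivative_continuous[OF f'[rule_format, OF that]] .
  then show ?case by (simp add: continuous_at_imp_continuous_on)
next
  case (Suc k)
  then obtain f' where "\<forall>x\<in>U. (f has_derivative f' x) (at x)"
    "\<forall>b\<in>Basis. Ck_on (Suc k) (\<lambda>x. f' x b) U" by auto
  with Suc.IH show ?case by auto
qed

lemma Ck_on_const: "Ck_on k (\<lambda>x. c) U"
proof (induction k arbitrary: c)
  case 0
  then show ?case by simp
next
  case (Suc k)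
  show ?case
    by (simp only: Ck_on.simps) (rule exI[of _ "\<lambda>x v. 0"], simp add: Suc.IH)
qed

lemma Ck_on_ident: "Ck_on k (\<lambda>x. x) U"
proof (cases k)
  case 0
  then show ?thesis by (simp add: continuous_on_id)
next
  case Suc
  then show ?thesis
    by (simp only: Ck_on.simps) (rule exI[of _ "\<lambda>x v. v"], simp add: Ck_on_const)
qed

lemma Ck_on_add: "Ck_on k f U \<Longrightarrow> Ck_on k g U \<Longrightarrow> Ck_on k (\<lambda>x. f x + g x) U"
proof (induction k arbitrary: f g)
  case 0
  then show ?case by (auto intro: continuous_on_add)
next
  case (Suc k)
  from Suc.prems obtain f' g' where
    "\<forall>x\<in>U. (f has_derivative f' x) (at x)" "\<forall>b\<in>Basis. Ck_on k (\<lambda>x. f' x b) U"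
    "\<forall>x\<in>U. (g has_derivative g' x) (at x)" "\<forall>b\<in>Basis. Ck_on k (\<lambda>x. g' x b) U"
    by auto
  with Suc.IH show ?case
    by (simp only: Ck_on.simps)
      (rule exI[of _ "\<lambda>x v. f' x v + g' x v"], auto intro: has_derivative_add)
qed

lemma Ck_on_compose_bounded_linear:
  assumes "bounded_linear L"
  shows "Ck_on k f U \<Longrightarrow> Ck_on k (\<lambda>x. L (f x)) U"
proof (induction k arbitrary: f)
  case 0
  then show ?case
    using assms by (auto intro: continuous_on_compose2[of UNIV L] linear_continuous_on)
next
  case (Suc k)
  from Suc.prems obtain f' where
    "\<forall>x\<in>U. (f has_derivative f' x) (at x)" "\<forall>b\<in>Basis. Ck_on k (\<lambda>x. f' x b) U"
    by auto
  with Suc.IH assms show ?case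
    by (simp only: Ck_on.simps)
      (rule exI[of _ "\<lambda>x v. L (f' x v)"], auto intro: bounded_linear.has_derivative)
qed

lemma Ck_on_bounded_bilinear:
  assumes "bounded_bilinear P"
  shows "Ck_on k f U \<Longrightarrow> Ck_on k g U \<Longrightarrow> Ck_on k (\<lambda>x. P (f x) (g x)) U"
proof (induction k arbitrary: f g)
  case 0
  then show ?case using assms by (auto intro: bounded_bilinear.continuous_on)
next
  case (Suc k)
  from Suc.prems obtain f' g' where
    "\<forall>x\<in>U. (f has_derivative f' x) (at x)" "\<forall>b\<in>Basis. Ck_on k (\<lambda>x. f' x b) U"
    "\<forall>x\<in>U. (g has_derivative g' x) (at x)" "\<forall>b\<in>Basis. Ck_on k (\<lambda>x. g' x b) U"
    by auto
  moreover have "Ck_on k f U" "Ck_on k g U" using Suc.prems Ck_on_SucD by auto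
  ultimately show ?case using Suc.IH assms
    by (simp only: Ck_on.simps)
      (rule exI[of _ "\<lambda>x v. P (f x) (g' x v) + P (f' x v) (g x)"],
       auto intro!: bounded_bilinear.FDERIV Ck_on_add)
qed

lemma Ck_on_Pair: "Ck_on k f U \<Longrightarrow> Ck_on k g U \<Longrightarrow> Ck_on k (\<lambda>x. (f x, g x)) U"
  using Ck_on_add[OF
      Ck_on_compose_bounded_linear[OF bounded_linear_Pair[OF bounded_linear_ident bounded_linear_zero]]
      Ck_on_compose_bounded_linear[OF bounded_linear_Pair[OF bounded_linear_zero bounded_linear_ident]]]
  by simp

lemma Ck_on_mult: "Ck_on k f U \<Longrightarrow> Ck_on k g U \<Longrightarrow> Ck_on k (\<lambda>x. f x * g x :: real) U"
  by (rule Ck_on_bounded_bilinear[OF bounded_bilinear_mult])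

lemma Ck_on_scaleR: "Ck_on k f U \<Longrightarrow> Ck_on k g U \<Longrightarrow> Ck_on k (\<lambda>x. f x *\<^sub>R g x) U"
  by (rule Ck_on_bounded_bilinear[OF bounded_bilinear_scaleR])

lemma Ck_on_inner: "Ck_on k f U \<Longrightarrow> Ck_on k g U \<Longrightarrow> Ck_on k (\<lambda>x. f x \<bullet> g x) U"
  by (rule Ck_on_bounded_bilinear[OF bounded_bilinear_inner])

lemma Ck_on_fst: "Ck_on k f U \<Longrightarrow> Ck_on k (\<lambda>x. fst (f x)) U"
  by (rule Ck_on_compose_bounded_linear[OF bounded_linear_fst])

lemma Ck_on_snd: "Ck_on k f U \<Longrightarrow> Ck_on k (\<lambda>x. snd (f x)) U"
  by (rule Ck_on_compose_bounded_linear[OF bounded_linear_snd])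

lemma Ck_on_minus: "Ck_on k f U \<Longrightarrow> Ck_on k (\<lambda>x. - f x) U"
  by (rule Ck_on_compose_bounded_linear[OF bounded_linear_minus[OF bounded_linear_ident]])

lemma Ck_on_diff: "Ck_on k f U \<Longrightarrow> Ck_on k g U \<Longrightarrow> Ck_on k (\<lambda>x. f x - g x) U"
  using Ck_on_add[OF _ Ck_on_minus, of k f U g] by simp

lemma Ck_on_power2: "Ck_on k f U \<Longrightarrow> Ck_on k (\<lambda>x. (f x)\<^sup>2 :: real) U"
  using Ck_on_mult[of k f U f] by (simp add: power2_eq_square)

lemma Ck_on_inverse:
  fixes g :: "'a::euclidean_space \<Rightarrow> real"
  shows "Ck_on k g U \<Longrightarrow> \<forall>x\<in>U. g x \<noteq> 0 \<Longrightarrow> Ck_on k (\<lambda>x. inverse (g x)) U"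
proof (induction k arbitrary: g)
  case 0
  then show ?case by (auto intro: continuous_on_inverse)
next
  case (Suc k)
  from Suc.prems(1) obtain g' where
    "\<forall>x\<in>U. (g has_derivative g' x) (at x)" "\<forall>b\<in>Basis. Ck_on k (\<lambda>x. g' x b) U"
    by auto
  moreover have "Ck_on k (\<lambda>x. inverse (g x)) U" using Suc Ck_on_SucD by blast
  ultimately show ?case using Suc.prems(2)
    by (simp only: Ck_on.simps)
      (rule exI[of _ "\<lambda>x v. - (inverse (g x) * g' x v * inverse (g x))"],
       auto intro!: has_derivative_inverse Ck_on_mult Ck_on_minus)
qed

lemma Ck_on_divide:
  "Ck_on k f U \<Longrightarrow> Ck_on k g U \<Longrightarrow> \<forall>x\<in>U. g x \<noteq> 0 \<Longrightarrow> Ck_on k (\<lambda>x. f x / g x :: real) U"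
  using Ck_on_mult[OF _ Ck_on_inverse, of k f U g] by (simp add: divide_inverse)

lemmas Ck_on_intros = Ck_on_const Ck_on_ident Ck_on_add Ck_on_diff Ck_on_minus Ck_on_mult
  Ck_on_scaleR Ck_on_inner Ck_on_power2 Ck_on_fst Ck_on_snd Ck_on_Pair

section \<open>The Cayley transform\<close>

lemma power2_norm_prod_real2:
  fixes p :: "'a::real_inner \<times> real \<times> real"
  shows "(norm p)\<^sup>2 = fst p \<bullet> fst p + (fst (snd p))\<^sup>2 + (snd (snd p))\<^sup>2"
  by (cases p) (simp add: norm_Pair power2_norm_eq_inner)

lemma norm_eq_1_prod_real2:
  fixes p :: "'a::real_inner \<times> real \<times> real"
  shows "norm p = 1 \<longleftrightarrow> fst p \<bullet> fst p + (fst (snd p))\<^sup>2 + (snd (snd p))\<^sup>2 = 1"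
  unfolding power2_norm_prod_real2[symmetric] by (smt (verit) norm_ge_zero power2_eq_1_iff)

lemma inner_rotate_pair:
  fixes x y :: "'a::real_inner"
  shows "(t *\<^sub>R x - u *\<^sub>R y) \<bullet> (t *\<^sub>R x - u *\<^sub>R y) + (u *\<^sub>R x + t *\<^sub>R y) \<bullet> (u *\<^sub>R x + t *\<^sub>R y)
     = (t\<^sup>2 + u\<^sup>2) * (x \<bullet> x + y \<bullet> y)"
  by (simp add: inner_diff_left inner_diff_right inner_add_left inner_add_right
      inner_commute[of y x] algebra_simps power2_eq_square)

lemma inner_antisym_scaleR_deriv:
  fixes P Q dP dQ :: "'a::real_inner"
  shows "(c *\<^sub>R P) \<bullet> (dc *\<^sub>R Q + c *\<^sub>R dQ) - (c *\<^sub>R Q) \<bullet> (dc *\<^sub>R P + c *\<^sub>R dP)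
    = c\<^sup>2 * (P \<bullet> dQ - Q \<bullet> dP)"
  by (simp add: inner_add_right inner_commute[of Q P] algebra_simps power2_eq_square)

lemma inner_antisym_rotate_deriv:
  fixes x y dx dy :: "'a::real_inner"
  shows "(t *\<^sub>R x - u *\<^sub>R y) \<bullet> (- (dt *\<^sub>R y) - t *\<^sub>R dy - du *\<^sub>R x - u *\<^sub>R dx)
       - (- (t *\<^sub>R y) - u *\<^sub>R x) \<bullet> (dt *\<^sub>R x + t *\<^sub>R dx - du *\<^sub>R y - u *\<^sub>R dy)
     = - (t\<^sup>2 + u\<^sup>2) * (x \<bullet> dy - y \<bullet> dx) + (x \<bullet> x + y \<bullet> y) * (u * dt - t * du)"
  by (simp add: inner_diff_left inner_diff_right inner_add_left inner_add_right
      inner_commute[of y x] algebra_simps power2_eq_square)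

(* In complex notation cayley_core r w s t = (-2 i r conj(w), 1 - zeta) / (1 + zeta) with
   zeta = s - i t, and cayley_den s t = |1 + zeta|^2. The transform proper has s = r^2 |w|^2;
   keeping s a separate argument turns its derivative into a chain-rule computation. *)
definition cayley_den :: "real \<Rightarrow> real \<Rightarrow> real" where
  "cayley_den s t = t\<^sup>2 + (1 + s)\<^sup>2"

definition cayley_core :: "real \<Rightarrow> 'k::finite R2m \<Rightarrow> real \<Rightarrow> real \<Rightarrow> 'k R2n" where
  "cayley_core r w s t =
     (let D = cayley_den s t in
      (((2 * r / D) *\<^sub>R (t *\<^sub>R fst w - (1 + s) *\<^sub>R snd w),
        (2 * r / D) *\<^sub>R (- (t *\<^sub>R snd w) - (1 + s) *\<^sub>R fst w)),
       ((1 - s\<^sup>2 - t\<^sup>2) / D, 2 * t / D)))"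

definition cayley_core_deriv ::
    "real \<Rightarrow> 'k::finite R2m \<Rightarrow> real \<Rightarrow> real \<Rightarrow> 'k R2m \<Rightarrow> real \<Rightarrow> real \<Rightarrow> 'k R2n" where
  "cayley_core_deriv r w s t dw ds dt =
     (let D = cayley_den s t; dD = 2 * t * dt + 2 * (1 + s) * ds in
      (((- 2 * r * dD / D\<^sup>2) *\<^sub>R (t *\<^sub>R fst w - (1 + s) *\<^sub>R snd w)
          + (2 * r / D) *\<^sub>R (dt *\<^sub>R fst w + t *\<^sub>R fst dw - ds *\<^sub>R snd w - (1 + s) *\<^sub>R snd dw),
        (- 2 * r * dD / D\<^sup>2) *\<^sub>R (- (t *\<^sub>R snd w) - (1 + s) *\<^sub>R fst w)
          + (2 * r / D) *\<^sub>R (- (dt *\<^sub>R snd w) - t *\<^sub>R snd dw - ds *\<^sub>R fst w - (1 + s) *\<^sub>R fst dw)),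
       ((- 2 * s * ds - 2 * t * dt) / D - (1 - s\<^sup>2 - t\<^sup>2) * dD / D\<^sup>2,
        2 * dt / D - 2 * t * dD / D\<^sup>2)))"

lemma cayley_den_pos: "s \<ge> 0 \<Longrightarrow> cayley_den s t > 0"
  unfolding cayley_den_def by (simp add: add_nonneg_pos)

lemma has_derivative_cayley_den:
  assumes "(s has_derivative s') (at x)" "(t has_derivative t') (at x)"
  shows "((\<lambda>x. cayley_den (s x) (t x)) has_derivative
           (\<lambda>v. 2 * t x * t' v + 2 * (1 + s x) * s' v)) (at x)"
  unfolding cayley_den_def
  by (rule derivative_eq_intros assms refl)+ (simp add: fun_eq_iff algebra_simps)

lemma has_derivative_cayley_core:
  assumes "(w has_derivative w') (at x)" "(s has_derivative s') (at x)"
    "(t has_derivative t') (at x)" "cayley_den (s x) (t x) \<noteq> 0"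
  shows "((\<lambda>x. cayley_core r (w x) (s x) (t x)) has_derivative
           (\<lambda>v. cayley_core_deriv r (w x) (s x) (t x) (w' v) (s' v) (t' v))) (at x)"
  unfolding cayley_core_def cayley_core_deriv_def Let_def
  by (rule has_derivative_eq_rhs, (rule derivative_eq_intros has_derivative_cayley_den assms refl)+)
    (use assms(4) in \<open>simp add: fun_eq_iff vec_eq_iff field_simps power2_eq_square\<close>)

lemma norm_cayley_core:
  assumes "s = r\<^sup>2 * (w \<bullet> w)"
  shows "norm (cayley_core r w s t) = 1"
proof -
  define D where "D = cayley_den s t"
  have "s \<ge> 0" using assms by simp
  then have D: "D > 0" "t\<^sup>2 + (1 + s)\<^sup>2 = D"
    unfolding D_def using cayley_den_pos by (auto simp: cayley_den_def)
  have "fst (cayley_core r w s t) \<bullet> fst (cayley_core r w s t)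
      = (2 * r / D)\<^sup>2 * ((t\<^sup>2 + (1 + s)\<^sup>2) * (w \<bullet> w))"
    unfolding cayley_core_def Let_def D_def[symmetric]
    using inner_rotate_pair[of t "fst w" "1 + s" "snd w"]
    by (cases w) (simp add: inner_Pair power2_eq_square algebra_simps)
  also have "\<dots> = 4 * s / D"
    unfolding D(2) using D(1) assms by (simp add: power2_eq_square field_simps)
  finally have w: "fst (cayley_core r w s t) \<bullet> fst (cayley_core r w s t) = 4 * s / D" .
  have "fst (cayley_core r w s t) \<bullet> fst (cayley_core r w s t) + (fst (snd (cayley_core r w s t)))\<^sup>2
      + (snd (snd (cayley_core r w s t)))\<^sup>2 = 4 * s / D + ((1 - s\<^sup>2 - t\<^sup>2) / D)\<^sup>2 + (2 * t / D)\<^sup>2"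
    unfolding w by (simp add: cayley_core_def Let_def D_def)
  also have "\<dots> = (4 * s * D + (1 - s\<^sup>2 - t\<^sup>2)\<^sup>2 + 4 * t\<^sup>2) / D\<^sup>2"
    using D(1) by (simp add: field_simps power2_eq_square)
  also have "4 * s * D + (1 - s\<^sup>2 - t\<^sup>2)\<^sup>2 + 4 * t\<^sup>2 = D\<^sup>2"
    unfolding D(2)[symmetric] by (simp add: power2_eq_square algebra_simps)
  finally show ?thesis unfolding norm_eq_1_prod_real2 using D(1) by simp
qed

lemma alpha_std_cayley_core:
  assumes "s = r\<^sup>2 * (w \<bullet> w)"
  shows "alpha_std (cayley_core r w s t) (cayley_core_deriv r w s t dw ds dt)
    = (2 * dt - 4 * r\<^sup>2 * lambda_st w dw) / cayley_den s t"
proof -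
  define D dD where "D = cayley_den s t" and "dD = 2 * t * dt + 2 * (1 + s) * ds"
  have "s \<ge> 0" using assms by simp
  then have D: "D > 0" "t\<^sup>2 + (1 + s)\<^sup>2 = D"
    unfolding D_def using cayley_den_pos by (auto simp: cayley_den_def)
  define L m where "L = lambda_st w dw" and "m = w \<bullet> w"
  have lam: "lambda_st (fst (cayley_core r w s t)) (fst (cayley_core_deriv r w s t dw ds dt))
      = (2 * r / D)\<^sup>2 * (- D * L + m * ((1 + s) * dt - t * ds))"
    unfolding cayley_core_def cayley_core_deriv_def Let_def D_def[symmetric] dD_def[symmetric]
      lambda_st_def fst_conv snd_conv inner_antisym_scaleR_deriv inner_antisym_rotate_deriv
      D(2) L_def m_def
    by (cases w) (simp add: inner_Pair)
  have "alpha_std (cayley_core r w s t) (cayley_core_deriv r w s t dw ds dt)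
      = (2 * r / D)\<^sup>2 * (- D * L + m * ((1 + s) * dt - t * ds))
        + ((1 - s\<^sup>2 - t\<^sup>2) / D * (2 * dt / D - 2 * t * dD / D\<^sup>2)
           - 2 * t / D * ((- 2 * s * ds - 2 * t * dt) / D - (1 - s\<^sup>2 - t\<^sup>2) * dD / D\<^sup>2))"
    unfolding alpha_std_def lam[symmetric]
    by (simp add: cayley_core_def cayley_core_deriv_def Let_def D_def dD_def)
  also have "\<dots> = (4 * r\<^sup>2 * (- D * L + m * ((1 + s) * dt - t * ds))
       + 2 * (1 - s\<^sup>2 + t\<^sup>2) * dt + 4 * t * s * ds) / D\<^sup>2"
    using D(1) by (simp add: field_simps power2_eq_square)
  also have "4 * r\<^sup>2 * (- D * L + m * ((1 + s) * dt - t * ds))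
       + 2 * (1 - s\<^sup>2 + t\<^sup>2) * dt + 4 * t * s * ds = D * (2 * dt - 4 * r\<^sup>2 * L)"
    unfolding D(2)[symmetric] assms m_def[symmetric] by (simp add: algebra_simps power2_eq_square)
  also have "D * (2 * dt - 4 * r\<^sup>2 * L) / D\<^sup>2 = (2 * dt - 4 * r\<^sup>2 * L) / D"
    using D(1) by (simp add: power2_eq_square)
  finally show ?thesis unfolding L_def D_def .
qed

definition cayley :: "real \<Rightarrow> real \<Rightarrow> 'k::finite cyl \<Rightarrow> 'k R2n" where
  "cayley r a q = cayley_core r (fst q) (r\<^sup>2 * (fst q \<bullet> fst q)) (2 * r\<^sup>2 * (a - snd q))"

lemma has_derivative_cayley:
  "(cayley r a has_derivative
     (\<lambda>v. cayley_core_deriv r (fst q) (r\<^sup>2 * (fst q \<bullet> fst q)) (2 * r\<^sup>2 * (a - snd q))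
            (fst v) (2 * r\<^sup>2 * (fst q \<bullet> fst v)) (- 2 * r\<^sup>2 * snd v))) (at q)"
proof -
  have s: "((\<lambda>q. r\<^sup>2 * (fst q \<bullet> fst q)) has_derivative (\<lambda>v. 2 * r\<^sup>2 * (fst q \<bullet> fst v))) (at q)"
    by (rule has_derivative_eq_rhs, (rule derivative_eq_intros refl)+)
      (simp add: fun_eq_iff inner_commute algebra_simps)
  have t: "((\<lambda>q. 2 * r\<^sup>2 * (a - snd q)) has_derivative (\<lambda>v. - 2 * r\<^sup>2 * snd v)) (at q)"
    by (rule has_derivative_eq_rhs, (rule derivative_eq_intros refl)+) (simp add: fun_eq_iff)
  show ?thesis
    unfolding cayley_def[abs_def]
    by (rule has_derivative_cayley_core[OF has_derivative_fst[OF has_derivative_ident] s t])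
      (simp add: cayley_den_pos order_less_imp_not_eq2)
qed

lemma alpha_std_cayley:
  "alpha_std (cayley r a q) (frechet_derivative (cayley r a) (at q) v)
    = - 4 * r\<^sup>2 / cayley_den (r\<^sup>2 * (fst q \<bullet> fst q)) (2 * r\<^sup>2 * (a - snd q)) * beta_cyl q v"
proof -
  define D where "D = cayley_den (r\<^sup>2 * (fst q \<bullet> fst q)) (2 * r\<^sup>2 * (a - snd q))"
  have "D > 0" unfolding D_def by (simp add: cayley_den_pos)
  have "alpha_std (cayley r a q) (frechet_derivative (cayley r a) (at q) v)
      = (2 * (- 2 * r\<^sup>2 * snd v) - 4 * r\<^sup>2 * lambda_st (fst q) (fst v)) / D"
    unfolding frechet_derivative_at[OF has_derivative_cayley, symmetric] cayley_def D_def
    by (rule alpha_std_cayley_core) simp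
  also have "\<dots> = - 4 * r\<^sup>2 / D * beta_cyl q v"
    using \<open>D > 0\<close> unfolding beta_cyl_def by (simp add: field_simps)
  finally show ?thesis unfolding D_def .
qed

lemma norm_cayley: "norm (cayley r a q) = 1"
  unfolding cayley_def by (simp add: norm_cayley_core)

lemma Ck_on_cayley_den: "Ck_on k f U \<Longrightarrow> Ck_on k g U \<Longrightarrow> Ck_on k (\<lambda>x. cayley_den (f x) (g x)) U"
  unfolding cayley_den_def by (intro Ck_on_intros)

lemma smooth_on_cayley: "smooth_on (cayley r a) UNIV"
proof -
  have "\<forall>q\<in>UNIV. cayley_den (r\<^sup>2 * (fst q \<bullet> fst q)) (2 * r\<^sup>2 * (a - snd q)) \<noteq> 0"
    by (simp add: cayley_den_pos order_less_imp_not_eq2)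
  then show ?thesis
    unfolding smooth_on_def cayley_def[abs_def] cayley_core_def Let_def
    by (intro allI conjI open_UNIV Ck_on_intros Ck_on_divide Ck_on_cayley_den)
qed

(* |1 + x_n + i y_n|^2, which vanishes on the sphere only at p_-. *)
definition cayley_inv_den :: "'k::finite R2n \<Rightarrow> real" where
  "cayley_inv_den p = (1 + fst (snd p))\<^sup>2 + (snd (snd p))\<^sup>2"

definition cayley_inv :: "real \<Rightarrow> real \<Rightarrow> 'k::finite R2n \<Rightarrow> 'k cyl" where
  "cayley_inv r a p =
    (let N = cayley_inv_den p; (A, B) = fst p; (xn, yn) = snd p in
     (((1 / (r * N)) *\<^sub>R (yn *\<^sub>R A - (1 + xn) *\<^sub>R B),
       (- 1 / (r * N)) *\<^sub>R ((1 + xn) *\<^sub>R A + yn *\<^sub>R B)),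
      a - yn / (r\<^sup>2 * N)))"

lemma cayley_inv_den_cayley_core:
  assumes "cayley_den s t \<noteq> 0"
  shows "cayley_inv_den (cayley_core r w s t) = 4 / cayley_den s t"
proof -
  define D where "D = cayley_den s t"
  have D: "D \<noteq> 0" "t\<^sup>2 + (1 + s)\<^sup>2 = D" using assms unfolding D_def cayley_den_def by auto
  have "1 + (1 - s\<^sup>2 - t\<^sup>2) / D = 2 * (1 + s) / D"
    using D by (simp add: field_simps power2_eq_square)
  then have "cayley_inv_den (cayley_core r w s t) = (2 * (1 + s) / D)\<^sup>2 + (2 * t / D)\<^sup>2"
    by (simp add: cayley_inv_den_def cayley_core_def Let_def D_def)
  also have "\<dots> = 4 * (t\<^sup>2 + (1 + s)\<^sup>2) / D\<^sup>2"
    using D(1) by (simp add: power2_eq_square field_simps)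
  finally show ?thesis unfolding D(2) D_def by (simp add: power2_eq_square)
qed

lemma cayley_inv_cayley_core:
  assumes "r \<noteq> 0" and "s = r\<^sup>2 * (w \<bullet> w)"
  shows "cayley_inv r a (cayley_core r w s t) = (w, a - t / (2 * r\<^sup>2))"
proof -
  obtain x y where w: "w = (x, y)" by fastforce
  define D where "D = cayley_den s t"
  have "s \<ge> 0" using assms(2) by simp
  then have D: "D > 0" "t\<^sup>2 + (1 + s)\<^sup>2 = D"
    unfolding D_def using cayley_den_pos by (auto simp: cayley_den_def)
  have N: "cayley_inv_den (cayley_core r w s t) = 4 / D"
    unfolding D_def using D(1) D_def by (simp add: cayley_inv_den_cayley_core)
  have xn: "1 + (1 - s\<^sup>2 - t\<^sup>2) / D = 2 * (1 + s) / D"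
    using D by (simp add: field_simps power2_eq_square)
  have "(2 * t / D) *\<^sub>R ((2 * r / D) *\<^sub>R (t *\<^sub>R x - (1 + s) *\<^sub>R y))
      - (2 * (1 + s) / D) *\<^sub>R ((2 * r / D) *\<^sub>R (- (t *\<^sub>R y) - (1 + s) *\<^sub>R x))
      = (4 * r * (t\<^sup>2 + (1 + s)\<^sup>2) / D\<^sup>2) *\<^sub>R x"
    using D(1) by (simp add: vec_eq_iff field_simps power2_eq_square)
  then have A: "(1 / (r * (4 / D))) *\<^sub>R ((2 * t / D) *\<^sub>R ((2 * r / D) *\<^sub>R (t *\<^sub>R x - (1 + s) *\<^sub>R y))
      - (2 * (1 + s) / D) *\<^sub>R ((2 * r / D) *\<^sub>R (- (t *\<^sub>R y) - (1 + s) *\<^sub>R x))) = x"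
    unfolding D(2) using D(1) assms(1) by (simp add: power2_eq_square)
  have "(2 * (1 + s) / D) *\<^sub>R ((2 * r / D) *\<^sub>R (t *\<^sub>R x - (1 + s) *\<^sub>R y))
      + (2 * t / D) *\<^sub>R ((2 * r / D) *\<^sub>R (- (t *\<^sub>R y) - (1 + s) *\<^sub>R x))
      = (- 4 * r * (t\<^sup>2 + (1 + s)\<^sup>2) / D\<^sup>2) *\<^sub>R y"
    using D(1) by (simp add: vec_eq_iff field_simps power2_eq_square)
  then have B: "(- 1 / (r * (4 / D))) *\<^sub>R ((2 * (1 + s) / D) *\<^sub>R ((2 * r / D) *\<^sub>R (t *\<^sub>R x - (1 + s) *\<^sub>R y))
      + (2 * t / D) *\<^sub>R ((2 * r / D) *\<^sub>R (- (t *\<^sub>R y) - (1 + s) *\<^sub>R x))) = y"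
    unfolding D(2) using D(1) assms(1) by (simp add: power2_eq_square)
  have z: "a - 2 * t / D / (r\<^sup>2 * (4 / D)) = a - t / (2 * r\<^sup>2)"
    using D(1) by (simp add: field_simps)
  have "cayley_core r w s t = (((2 * r / D) *\<^sub>R (t *\<^sub>R x - (1 + s) *\<^sub>R y),
      (2 * r / D) *\<^sub>R (- (t *\<^sub>R y) - (1 + s) *\<^sub>R x)), ((1 - s\<^sup>2 - t\<^sup>2) / D, 2 * t / D))"
    by (simp add: cayley_core_def Let_def D_def w)
  then show ?thesis
    unfolding cayley_inv_def N by (simp only: Let_def prod.case fst_conv snd_conv xn A B z w)
qed

lemma cayley_inv_cayley: "r \<noteq> 0 \<Longrightarrow> cayley_inv r a (cayley r a q) = q"
  unfolding cayley_def by (simp add: cayley_inv_cayley_core)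

lemma inner_fst_cayley_inv:
  assumes "r \<noteq> 0" and "cayley_inv_den p \<noteq> 0"
  shows "r\<^sup>2 * (fst (cayley_inv r a p) \<bullet> fst (cayley_inv r a p)) = fst p \<bullet> fst p / cayley_inv_den p"
proof -
  obtain A B xn yn where p: "p = ((A, B), (xn, yn))" by (metis prod.collapse)
  define N where "N = cayley_inv_den p"
  have N: "yn\<^sup>2 + (1 + xn)\<^sup>2 = N" "N \<noteq> 0"
    using assms(2) unfolding N_def cayley_inv_den_def p by auto
  have "fst (cayley_inv r a p) = ((1 / (r * N)) *\<^sub>R (yn *\<^sub>R A - (1 + xn) *\<^sub>R B),
      (- 1 / (r * N)) *\<^sub>R ((1 + xn) *\<^sub>R A + yn *\<^sub>R B))"
    by (simp add: cayley_inv_def Let_def N_def p)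
  then have "r\<^sup>2 * (fst (cayley_inv r a p) \<bullet> fst (cayley_inv r a p))
      = r\<^sup>2 * ((1 / (r * N))\<^sup>2 * ((yn\<^sup>2 + (1 + xn)\<^sup>2) * (A \<bullet> A + B \<bullet> B)))"
    unfolding inner_rotate_pair[symmetric] by (simp add: inner_Pair power2_eq_square algebra_simps)
  also have "\<dots> = (A \<bullet> A + B \<bullet> B) / N"
    unfolding N(1) using assms(1) N(2) by (simp add: field_simps power2_eq_square)
  finally show ?thesis unfolding N_def p by (simp add: inner_Pair)
qed

lemma cayley_cayley_inv:
  assumes r: "r \<noteq> 0" and "norm p = 1" and "cayley_inv_den p \<noteq> 0"
  shows "cayley r a (cayley_inv r a p) = p"
proof -
  obtain A B xn yn where p: "p = ((A, B), (xn, yn))" by (metis prod.collapse)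
  define N where "N = cayley_inv_den p"
  have N: "yn\<^sup>2 + (1 + xn)\<^sup>2 = N" "N \<noteq> 0"
    using assms(3) unfolding N_def cayley_inv_den_def p by auto
  have sphere: "A \<bullet> A + B \<bullet> B = 1 - xn\<^sup>2 - yn\<^sup>2"
    using assms(2) unfolding norm_eq_1_prod_real2 p by (simp add: inner_Pair)
  define x y where "x = (1 / (r * N)) *\<^sub>R (yn *\<^sub>R A - (1 + xn) *\<^sub>R B)"
    and "y = (- 1 / (r * N)) *\<^sub>R ((1 + xn) *\<^sub>R A + yn *\<^sub>R B)"
  have inv: "cayley_inv r a p = ((x, y), a - yn / (r\<^sup>2 * N))"
    unfolding cayley_inv_def x_def y_def N_def p by (simp add: Let_def)
  have "r\<^sup>2 * ((x, y) \<bullet> (x, y)) = fst p \<bullet> fst p / N"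
    using inner_fst_cayley_inv[OF r assms(3), of a] unfolding inv N_def by simp
  also have "\<dots> = (A \<bullet> A + B \<bullet> B) / N"
    by (simp add: p inner_Pair)
  also have "\<dots> = 2 * (1 + xn) / N - 1"
    unfolding sphere using N(2) N(1)[symmetric] by (simp add: field_simps power2_eq_square)
  finally have s: "r\<^sup>2 * ((x, y) \<bullet> (x, y)) = 2 * (1 + xn) / N - 1" .
  have t: "2 * r\<^sup>2 * (a - (a - yn / (r\<^sup>2 * N))) = 2 * yn / N"
    using r N(2) by (simp add: field_simps)
  have D: "cayley_den (2 * (1 + xn) / N - 1) (2 * yn / N) = 4 / N"
  proof -
    have "cayley_den (2 * (1 + xn) / N - 1) (2 * yn / N) = 4 * (yn\<^sup>2 + (1 + xn)\<^sup>2) / N\<^sup>2"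
      unfolding cayley_den_def using N(2) by (simp add: field_simps power2_eq_square)
    then show ?thesis unfolding N(1) using N(2) by (simp add: power2_eq_square)
  qed
  have e1: "(2 * r / (4 / N)) *\<^sub>R ((2 * yn / N) *\<^sub>R x - (1 + (2 * (1 + xn) / N - 1)) *\<^sub>R y)
      = ((yn\<^sup>2 + (1 + xn)\<^sup>2) / N) *\<^sub>R A"
    unfolding x_def y_def using r N(2) by (simp add: vec_eq_iff field_simps power2_eq_square)
  have e2: "(2 * r / (4 / N)) *\<^sub>R (- ((2 * yn / N) *\<^sub>R y) - (1 + (2 * (1 + xn) / N - 1)) *\<^sub>R x)
      = ((yn\<^sup>2 + (1 + xn)\<^sup>2) / N) *\<^sub>R B"
    unfolding x_def y_def using r N(2) by (simp add: vec_eq_iff field_simps power2_eq_square)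
  have e3: "(1 - (2 * (1 + xn) / N - 1)\<^sup>2 - (2 * yn / N)\<^sup>2) / (4 / N) = xn"
  proof -
    have "(1 - (2 * (1 + xn) / N - 1)\<^sup>2 - (2 * yn / N)\<^sup>2) / (4 / N)
       = (1 + xn) - (yn\<^sup>2 + (1 + xn)\<^sup>2) / N"
      using N(2) by (simp add: field_simps power2_eq_square)
    then show ?thesis unfolding N(1) using N(2) by simp
  qed
  have e4: "2 * (2 * yn / N) / (4 / N) = yn"
    using N(2) by (simp add: field_simps)
  show ?thesis
    unfolding cayley_def inv fst_conv snd_conv s t cayley_core_def Let_def D
    unfolding e1 e2 e3 e4 N(1) using N(2) p by simp
qed

lemma Ck_on_cayley_inv:
  assumes "r \<noteq> 0"
  shows "Ck_on k (cayley_inv r a) {p. cayley_inv_den p \<noteq> 0}"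
proof -
  have den: "Ck_on k cayley_inv_den U" for k and U :: "'k::finite R2n set"
    unfolding cayley_inv_den_def[abs_def] by (intro Ck_on_intros)
  have "\<forall>p\<in>{p. cayley_inv_den p \<noteq> 0}. r * cayley_inv_den p \<noteq> 0"
    "\<forall>p\<in>{p. cayley_inv_den p \<noteq> 0}. r\<^sup>2 * cayley_inv_den p \<noteq> 0"
    using assms by auto
  then show ?thesis
    unfolding cayley_inv_def[abs_def] Let_def case_prod_beta
    by (intro Ck_on_intros Ck_on_divide den)
qed

lemma inj_derivative_left_inverse:
  assumes "(f has_derivative f') (at x)" and "(g has_derivative g') (at (f x))"
    and "\<And>y. g (f y) = y"
  shows "inj f'"
proof -
  have "(g \<circ> f has_derivative g' \<circ> f') (at x)"
    using assms(1,2) by (rule diff_chain_at)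
  moreover have "g \<circ> f = id" using assms(3) by auto
  ultimately have "g' \<circ> f' = id"
    using has_derivative_unique has_derivative_id by metis
  then show ?thesis by (metis inj_on_id inj_on_imageI2)
qed

lemma inj_derivative_cayley:
  assumes "r \<noteq> 0"
  shows "inj (frechet_derivative (cayley r a) (at (q :: 'k::finite cyl)))"
proof -
  have "cayley_inv_den (cayley r a q) \<noteq> 0"
    unfolding cayley_def by (simp add: cayley_inv_den_cayley_core cayley_den_pos order_less_imp_not_eq2)
  moreover obtain G' where
    "\<forall>p :: 'k R2n \<in> {p. cayley_inv_den p \<noteq> 0}. (cayley_inv r a has_derivative G' p) (at p)"
    using Ck_on_cayley_inv[OF assms, where k = "Suc 0" and a = a] by auto
  ultimately have "(cayley_inv r a has_derivative G' (cayley r a q)) (at (cayley r a q))"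
    by blast
  from inj_derivative_left_inverse[OF has_derivative_cayley this cayley_inv_cayley[OF assms]]
  show ?thesis unfolding frechet_derivative_at[OF has_derivative_cayley, symmetric] .
qed

lemma snd_snd_cayley:
  "snd (snd (cayley r a q)) = 4 * r\<^sup>2 * (a - snd q) / cayley_den (r\<^sup>2 * (fst q \<bullet> fst q)) (2 * r\<^sup>2 * (a - snd q))"
  by (simp add: cayley_def cayley_core_def Let_def)

lemma cayley_mem_std_ball: "snd q \<le> a \<Longrightarrow> cayley r a q \<in> std_ball"
  unfolding std_ball_def
  by (simp add: norm_cayley snd_snd_cayley cayley_den_pos zero_le_divide_iff less_imp_le)

lemma cayley_mem_std_ball_bdry: "snd q = a \<Longrightarrow> cayley r a q \<in> std_ball_bdry"
  unfolding std_ball_bdry_def by (simp add: norm_cayley snd_snd_cayley)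

lemma contact_embedding_cayley:
  assumes "r \<noteq> 0"
  shows "contact_embedding a (cayley r a)"
  unfolding contact_embedding_def
proof (intro conjI ballI)
  show "\<exists>U. wcyl a \<subseteq> U \<and> smooth_on (cayley r a) U"
    using smooth_on_cayley by blast
  show "inj_on (cayley r a) (wcyl a)"
    by (metis cayley_inv_cayley[OF assms] inj_on_inverseI)
  show "cayley r a ` wcyl a \<subseteq> std_ball"
    by (auto simp: wcyl_def intro!: cayley_mem_std_ball)
next
  fix q :: "'a cyl"
  show "inj (frechet_derivative (cayley r a) (at q))"
    using inj_derivative_cayley[OF assms] .
  show "\<exists>f. f \<noteq> 0 \<and> (\<forall>v. alpha_std (cayley r a q) (frechet_derivative (cayley r a) (at q) v) = f * beta_cyl q v)"
    using assms by (intro exI[of _ "- 4 * r\<^sup>2 / cayley_den (r\<^sup>2 * (fst q \<bullet> fst q)) (2 * r\<^sup>2 * (a - snd q))"])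
      (simp add: alpha_std_cayley cayley_den_pos order_less_imp_not_eq2)
qed

section \<open>Covering the contact ball\<close>

lemma snd_cayley_inv: "snd (cayley_inv r a p) = a - snd (snd p) / (r\<^sup>2 * cayley_inv_den p)"
  by (simp add: cayley_inv_def Let_def case_prod_beta)

lemma norm_fst_cayley_inv_le:
  assumes "r \<noteq> 0" and "norm p = 1" and "1 \<le> r\<^sup>2 * cayley_inv_den p"
  shows "norm (fst (cayley_inv r a p)) \<le> 1"
proof -
  define K where "K = r\<^sup>2 * cayley_inv_den p"
  have K: "K \<ge> 1" "cayley_inv_den p \<noteq> 0" using assms(3) unfolding K_def by auto
  have "fst p \<bullet> fst p \<le> 1"
    using assms(2) zero_le_power2[of "fst (snd p)"] zero_le_power2[of "snd (snd p)"]
    unfolding norm_eq_1_prod_real2 by linarith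
  have "(norm (fst (cayley_inv r a p)))\<^sup>2 = fst p \<bullet> fst p / K"
    using inner_fst_cayley_inv[OF assms(1) K(2), of a] assms(1) K(2)
    unfolding K_def power2_norm_eq_inner by (simp add: field_simps)
  also have "\<dots> \<le> 1" using K(1) \<open>fst p \<bullet> fst p \<le> 1\<close> by simp
  finally show ?thesis by (simp add: power_le_one_iff)
qed

lemma cayley_inv_mem_wcyl:
  assumes "r \<noteq> 0" and "p \<in> std_ball"
    and "1 \<le> r\<^sup>2 * cayley_inv_den p" and "1 \<le> a * (r\<^sup>2 * cayley_inv_den p)"
  shows "cayley_inv r a p \<in> wcyl a"
proof -
  define K where "K = r\<^sup>2 * cayley_inv_den p"
  have K: "K > 0" "1 / K \<le> a" using assms(3,4) unfolding K_def by (auto simp: field_simps)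
  have p: "norm p = 1" "0 \<le> snd (snd p)" using assms(2) by (auto simp: std_ball_def)
  have "(snd (snd p))\<^sup>2 \<le> 1"
    using p(1) zero_le_power2[of "fst (snd p)"] inner_ge_zero[of "fst p"]
    unfolding norm_eq_1_prod_real2 by linarith
  then have "snd (snd p) \<le> 1" by (simp add: power_le_one_iff p(2))
  then have "0 \<le> snd (snd p) / K" "snd (snd p) / K \<le> a"
    using K p(2) by (auto intro: order_trans[OF divide_right_mono])
  then show ?thesis
    using norm_fst_cayley_inv_le[OF assms(1) p(1) assms(3)]
    by (simp add: wcyl_def snd_cayley_inv K_def)
qed

lemma cayley_inv_mem_wcyl_top:
  assumes "r \<noteq> 0" and "p \<in> std_ball_bdry" and "1 \<le> r\<^sup>2 * cayley_inv_den p"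
  shows "cayley_inv r a p \<in> wcyl_top a"
  using assms norm_fst_cayley_inv_le[OF assms(1) _ assms(3)]
  unfolding wcyl_top_def std_ball_bdry_def by (simp add: snd_cayley_inv)

lemma power2_dist_pole_minus:
  assumes "norm p = 1"
  shows "(dist pole_minus p)\<^sup>2 = 2 * (1 + fst (snd p))"
proof -
  have "(dist pole_minus p)\<^sup>2 = fst p \<bullet> fst p + (1 + fst (snd p))\<^sup>2 + (snd (snd p))\<^sup>2"
    unfolding dist_norm power2_norm_prod_real2 pole_minus_def
    by (simp add: zero_prod_def[symmetric] power2_eq_square algebra_simps)
  then show ?thesis
    using assms unfolding norm_eq_1_prod_real2
    by (simp add: power2_eq_square algebra_simps)
qed

lemma cayley_inv_den_far_from_pole:
  assumes "norm p = 1" and "0 < \<epsilon>" and "\<epsilon> \<le> dist pole_minus p"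
  shows "(\<epsilon>\<^sup>2 / 2)\<^sup>2 \<le> cayley_inv_den p"
proof -
  have "\<epsilon>\<^sup>2 \<le> 2 * (1 + fst (snd p))"
    using power_mono[OF assms(3), of 2] assms(2) power2_dist_pole_minus[OF assms(1)] by simp
  then have "(\<epsilon>\<^sup>2 / 2)\<^sup>2 \<le> (1 + fst (snd p))\<^sup>2"
    by (intro power_mono) auto
  then show ?thesis unfolding cayley_inv_den_def using zero_le_power2[of "snd (snd p)"] by linarith
qed

lemma cayley_covers_far_from_pole:
  assumes "0 < a" and "0 < \<epsilon>" and "p \<in> std_ball" and "\<epsilon> \<le> dist pole_minus p"
  defines "r \<equiv> 2 * (1 + 1 / a) / \<epsilon>\<^sup>2"
  shows "p \<in> cayley r a ` wcyl a"
    and "p \<in> std_ball_bdry \<Longrightarrow> p \<in> cayley r a ` wcyl_top a"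
proof -
  have "r > 0" unfolding r_def using assms(1,2) by (intro divide_pos_pos mult_pos_pos add_pos_pos) auto
  then have r: "r \<noteq> 0" by simp
  have p: "norm p = 1" using assms(3) by (simp add: std_ball_def)
  have "r * (\<epsilon>\<^sup>2 / 2) = 1 + 1 / a"
    unfolding r_def using assms(2) by simp
  then have "(1 + 1 / a)\<^sup>2 = r\<^sup>2 * (\<epsilon>\<^sup>2 / 2)\<^sup>2"
    by (metis power_mult_distrib)
  also have "\<dots> \<le> r\<^sup>2 * cayley_inv_den p"
    using cayley_inv_den_far_from_pole[OF p assms(2,4)] by (simp add: mult_left_mono)
  finally have K: "(1 + 1 / a)\<^sup>2 \<le> r\<^sup>2 * cayley_inv_den p" .
  have "1 \<le> (1 + 1 / a)\<^sup>2" "1 \<le> a * (1 + 1 / a)\<^sup>2"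
    using assms(1) by (simp_all add: power2_eq_square field_simps)
  then have large: "1 \<le> r\<^sup>2 * cayley_inv_den p" "1 \<le> a * (r\<^sup>2 * cayley_inv_den p)"
    using K mult_left_mono[OF K, of a] assms(1) by linarith+
  have "p = cayley r a (cayley_inv r a p)"
    using cayley_cayley_inv[OF r p] large(1) by force
  then show "p \<in> cayley r a ` wcyl a"
    and "p \<in> std_ball_bdry \<Longrightarrow> p \<in> cayley r a ` wcyl_top a"
    using cayley_inv_mem_wcyl[OF r assms(3) large] cayley_inv_mem_wcyl_top[OF r _ large(1)]
    by (metis image_eqI)+
qed

lemma pole_minus_mem_std_ball_bdry: "pole_minus \<in> std_ball_bdry"
  by (simp add: pole_minus_def std_ball_bdry_def norm_Pair)

lemma std_ball_bdry_subset_std_ball: "std_ball_bdry \<subseteq> std_ball"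
  by (auto simp: std_ball_bdry_def std_ball_def)

theorem lemma7p5:
  fixes a :: real and \<epsilon> :: real
  assumes "a > 0" and "\<epsilon> > 0"
  shows "\<exists>h :: 'k::finite cyl \<Rightarrow> 'k R2n.
           contact_embedding a h \<and>
           h ` wcyl_top a \<subseteq> std_ball_bdry \<and>
           std_ball_bdry - h ` wcyl_top a \<subseteq> ball pole_minus \<epsilon> \<and>
           std_ball - h ` wcyl a \<subseteq> {p. infdist p std_ball_bdry < \<epsilon>}"
proof (intro exI conjI)
  define r where "r = 2 * (1 + 1 / a) / \<epsilon>\<^sup>2"
  note covers = cayley_covers_far_from_pole[OF assms, folded r_def]
  have "r > 0" unfolding r_def using assms by (intro divide_pos_pos mult_pos_pos add_pos_pos) auto
  then show "contact_embedding a (cayley r a :: 'k cyl \<Rightarrow> 'k R2n)"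
    by (simp add: contact_embedding_cayley)
  show "cayley r a ` wcyl_top a \<subseteq> std_ball_bdry"
    by (auto simp: wcyl_top_def intro!: cayley_mem_std_ball_bdry)
  show "std_ball_bdry - cayley r a ` wcyl_top a \<subseteq> ball pole_minus \<epsilon>"
  proof
    fix p assume "p \<in> std_ball_bdry - cayley r a ` wcyl_top a"
    with covers(2)[of p] std_ball_bdry_subset_std_ball show "p \<in> ball pole_minus \<epsilon>"
      by (meson DiffD1 DiffD2 mem_ball not_le subsetD)
  qed
  have infdist_le_dist_pole: "infdist p std_ball_bdry \<le> dist pole_minus p" for p
    using infdist_le[OF pole_minus_mem_std_ball_bdry] by (metis dist_commute)
  show "std_ball - cayley r a ` wcyl a \<subseteq> {p. infdist p std_ball_bdry < \<epsilon>}"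
  proof
    fix p assume "p \<in> std_ball - cayley r a ` wcyl a"
    with covers(1)[of p] have "dist pole_minus p < \<epsilon>" by (meson DiffD1 DiffD2 not_le)
    with infdist_le_dist_pole[of p] show "p \<in> {p. infdist p std_ball_bdry < \<epsilon>}"
      by simp
  qed
qed

end
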